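(* Let $f_1,\ldots,f_k:[a,b]\to\mathbb R$ be measurable. Let $\{\Lambda_n=\{\lambda_{1,n},\ldots,\lambda_{d_n,n}\}\}_n$ be a sequence of finite multisets of real numbers with $d_n\to\infty$ that has an asymptotic distribution described by $f=\mathrm{diag}(f_1,\ldots,f_k)$. Let $\{L_{n,1}\}_n,\ldots,\{L_{n,k}\}_n$ be sequences of natural numbers with $L_{n,1}+\cdots+L_{n,k}=d_n$ for every $n$ and $L_{n,j}/d_n\to1/k$ for every $j$. Then for every $n$ there exists a partition $\{\Lambda_{n,1},\ldots,\Lambda_{n,k}\}$ of $\Lambda_n$ such that, for every $j=1,\ldots,k$, $|\Lambda_{n,j}|=L_{n,j}$ and $\{\Lambda_{n,j}\}_n$ has an asymptotic distribution described by $f_j$.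
   Context: A sequence of finite multisets $\{\Lambda_n=\{\lambda_{1,n},\ldots,\lambda_{d_n,n}\}\}_n$ with $d_n\to\infty$ has an asymptotic distribution described by $\mathrm{diag}(f_1,\ldots,f_k)$ (with $f_j:[a,b]\to\mathbb R$ measurable) if $\lim_n\frac1{d_n}\sum_{i=1}^{d_n}F(\lambda_{i,n})=\frac1{b-a}\int_a^b\frac1k\sum_{j=1}^kF(f_j(x))\,dx$ for every continuous $F:\mathbb C\to\mathbb C$ with bounded support; for a scalar $g$ this is the case $k=1$, $f_1=g$. *)

theory Defs
  imports "HOL-Analysis.Analysis" "HOL-Library.Multiset"
begin

definition bounded_support :: "(complex \<Rightarrow> complex) \<Rightarrow> bool" where
  "bounded_support F \<longleftrightarrow> bounded {z. F z \<noteq> 0}"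

text \<open>The sequence of finite multisets Lam has an asymptotic distribution described by
  diag(fs 0, ..., fs (k-1)) on [a,b]: d_n = size (Lam n) tends to infinity and the
  averages of F over Lam n converge to the (normalised) integral.\<close>
definition asym_distr ::
  "(nat \<Rightarrow> real multiset) \<Rightarrow> real \<Rightarrow> real \<Rightarrow> (nat \<Rightarrow> real \<Rightarrow> real) \<Rightarrow> nat \<Rightarrow> bool" where
  "asym_distr Lam a b fs k \<longleftrightarrow>
     filterlim (\<lambda>n. size (Lam n)) at_top sequentially \<and>
     (\<forall>F :: complex \<Rightarrow> complex. continuous_on UNIV F \<and> bounded_support F \<longrightarrow>
        (\<lambda>n. (\<Sum>x\<in>#Lam n. F (complex_of_real x)) / of_nat (size (Lam n)))
        \<longlonglongrightarrow>
        of_real (1 / (b - a)) *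
          (LINT x:{a..b}|lborel. (1 / of_nat k) * (\<Sum>j<k. F (complex_of_real (fs j x)))))"

end

theory Submission
  imports Defs "HOL-Probability.Probability"
begin

text \<open>Let \<open>\<mu>\<^sub>j\<close> be the distribution of \<open>f\<^sub>j\<close> under the normalised Lebesgue measure on
  \<open>[a, b]\<close> and \<open>G\<close> the distribution function of their average. The hypothesis makes the
  proportion of elements of \<open>\<Lambda>\<^sub>n\<close> below \<open>y\<close> tend to \<open>G y\<close> at every \<open>y\<close> that is not an atom.
  Splitting the mass below each quantile of \<open>G\<close> among the components, atoms proportionally,
  gives shares \<open>c\<^sub>j t\<close> that are nondecreasing, 1-Lipschitz, add up to \<open>t\<close> and satisfy
  \<open>c\<^sub>j (G x) = F\<^sub>j x / k\<close>, where \<open>F\<^sub>j\<close> is the distribution function of \<open>\<mu>\<^sub>j\<close>. After a vanishing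
  perturbation making the total share of \<open>j\<close> equal to \<open>L\<^sub>n\<^sub>j / d\<^sub>n\<close>, a greedy rounding assigns
  the sorted elements of \<open>\<Lambda>\<^sub>n\<close> to parts so that part \<open>j\<close> receives \<open>d\<^sub>n c\<^sub>j (m / d\<^sub>n)\<close> of the
  \<open>m\<close> smallest elements up to an error \<open>k\<close>, for every \<open>m\<close>. Hence the distribution function of
  part \<open>j\<close> converges to \<open>F\<^sub>j\<close> at its continuity points: the parts converge weakly to \<open>\<mu>\<^sub>j\<close>,
  which yields their asymptotic distribution.\<close>

section \<open>Greedy rounding of monotone targets\<close>

locale rounding_targets =
  fixes k d :: nat and T :: "nat \<Rightarrow> nat \<Rightarrow> real" and L :: "nat \<Rightarrow> nat"
  assumes sum_targets: "\<And>i. i \<le> d \<Longrightarrow> (\<Sum>j<k. T j i) = real i"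
    and target_Suc_mono: "\<And>j i. j < k \<Longrightarrow> i < d \<Longrightarrow> T j i \<le> T j (Suc i)"
    and target_final: "\<And>j. j < k \<Longrightarrow> T j d = real (L j)"
    and target_initial: "\<And>j. j < k \<Longrightarrow> T j 0 = 0"
begin

definition deficit :: "(nat \<Rightarrow> nat) \<Rightarrow> nat \<Rightarrow> nat \<Rightarrow> real" where
  "deficit c i j = T j (Suc i) - real (c j)"

definition greedy_step :: "(nat \<Rightarrow> nat) \<Rightarrow> nat \<Rightarrow> nat" where
  "greedy_step c i = arg_max (deficit c i) (\<lambda>j. j < k \<and> c j < L j)"

fun greedy_counts :: "nat \<Rightarrow> nat \<Rightarrow> nat" where
  "greedy_counts 0 = (\<lambda>_. 0)"
| "greedy_counts (Suc i) = (let c = greedy_counts i; j = greedy_step c i in c(j := Suc (c j)))"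

definition greedy_group :: "nat \<Rightarrow> nat" where
  "greedy_group i = greedy_step (greedy_counts i) i"

lemma greedy_counts_Suc:
  "greedy_counts (Suc i) j = greedy_counts i j + (if greedy_group i = j then 1 else 0)"
  by (simp add: Let_def greedy_group_def)

declare greedy_counts.simps(2)[simp del]

lemma greedy_counts_eq_card: "greedy_counts m j = card {i. i < m \<and> greedy_group i = j}"
proof (induction m)
  case (Suc m)
  have "{i. i < Suc m \<and> greedy_group i = j} =
      {i. i < m \<and> greedy_group i = j} \<union> (if greedy_group m = j then {m} else {})"
    by (auto simp: less_Suc_eq)
  then show ?case using Suc by (auto simp: greedy_counts_Suc card_insert_if)
qed simp

lemma target_mono: "j < k \<Longrightarrow> i \<le> i' \<Longrightarrow> i' \<le> d \<Longrightarrow> T j i \<le> T j i'"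
proof (induction i')
  case (Suc i')
  then show ?case using target_Suc_mono[of j i'] by (cases "i = Suc i'") (auto simp: le_Suc_eq)
qed simp

lemma sum_capacities: "(\<Sum>j<k. real (L j)) = real d"
  using sum_targets[of d] target_final by simp

text \<open>The deficits at step \<open>i\<close> add up to \<open>1\<close> and those of full groups are \<open>\<le> 0\<close>, so a
  group of maximal deficit among the non-full groups exists and has positive deficit.\<close>

lemma greedy_step_valid:
  assumes "\<forall>j<k. c j \<le> L j" "(\<Sum>j<k. c j) = i" "i < d"
  shows "greedy_step c i < k" "c (greedy_step c i) < L (greedy_step c i)"
    "deficit c i (greedy_step c i) > 0"
proof -
  define A where "A = {j. j < k \<and> c j < L j}"
  have "finite A" by (simp add: A_def)
  have full: "deficit c i j \<le> 0" if "j < k" "j \<notin> A" for j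
    using that assms(1) target_mono[of j "Suc i" d] target_final[of j] assms(3)
    by (force simp: A_def deficit_def)
  have "(\<Sum>j<k. deficit c i j) = 1"
    using sum_targets[of "Suc i"] assms(2,3) by (simp add: deficit_def sum_subtractf flip: of_nat_sum)
  moreover have "(\<Sum>j<k. deficit c i j) = (\<Sum>j\<in>A. deficit c i j) + (\<Sum>j\<in>{..<k} - A. deficit c i j)"
    by (subst sum.subset_diff[of A]) (auto simp: A_def add.commute)
  moreover have "(\<Sum>j\<in>{..<k} - A. deficit c i j) \<le> 0"
    using full by (intro sum_nonpos) auto
  ultimately have sum_A: "(\<Sum>j\<in>A. deficit c i j) \<ge> 1" by linarith
  then have "A \<noteq> {}" by auto
  then obtain j0 where j0: "j0 \<in> A" "\<forall>j\<in>A. deficit c i j \<le> deficit c i j0"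
    using \<open>finite A\<close> Max_in[of "deficit c i ` A"] Max_ge[of "deficit c i ` A"] by fastforce
  have "greedy_step c i \<in> A \<and> (\<forall>j\<in>A. deficit c i j \<le> deficit c i (greedy_step c i))"
    unfolding greedy_step_def
    by (rule arg_maxI[where P = "\<lambda>j. j < k \<and> c j < L j" and f = "deficit c i"])
      (use j0 in \<open>auto simp: A_def not_less\<close>)
  moreover from this have "(\<Sum>j\<in>A. deficit c i j) \<le> card A * deficit c i (greedy_step c i)"
    using sum_mono[of A "deficit c i" "\<lambda>_. deficit c i (greedy_step c i)"] by simp
  then have "0 < real (card A) * deficit c i (greedy_step c i)"
    using sum_A by linarith
  ultimately show "greedy_step c i < k" "c (greedy_step c i) < L (greedy_step c i)"
    "deficit c i (greedy_step c i) > 0"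
    by (auto simp: A_def zero_less_mult_iff)
qed

lemma greedy_counts_invariant:
  "i \<le> d \<Longrightarrow> (\<forall>j<k. real (greedy_counts i j) \<le> T j i + 1) \<and> (\<forall>j<k. greedy_counts i j \<le> L j)
     \<and> (\<Sum>j<k. greedy_counts i j) = i"
proof (induction i)
  case 0 then show ?case using target_initial by auto
next
  case (Suc i)
  then have IH: "\<forall>j<k. real (greedy_counts i j) \<le> T j i + 1" "\<forall>j<k. greedy_counts i j \<le> L j"
      "(\<Sum>j<k. greedy_counts i j) = i" and "i < d" by auto
  define g where "g = greedy_group i"
  have g: "g < k" "greedy_counts i g < L g" "real (greedy_counts i g) < T g (Suc i)"
    using greedy_step_valid[OF IH(2,3) \<open>i < d\<close>] by (simp_all add: g_def greedy_group_def deficit_def)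
  have counts: "greedy_counts (Suc i) j = greedy_counts i j + (if g = j then 1 else 0)" for j
    unfolding g_def by (rule greedy_counts_Suc)
  have "real (greedy_counts (Suc i) j) \<le> T j (Suc i) + 1" if "j < k" for j
    using g(3) IH(1) target_Suc_mono[OF that \<open>i < d\<close>] that by (fastforce simp: counts)
  moreover have "greedy_counts (Suc i) j \<le> L j" if "j < k" for j
    using IH(2) g(2) that by (auto simp: counts Suc_le_eq)
  moreover have "(\<Sum>j<k. greedy_counts (Suc i) j) = Suc i"
    using IH(3) g(1) by (simp add: counts sum.distrib)
  ultimately show ?case by blast
qed

lemma greedy_group_less: "i < d \<Longrightarrow> greedy_group i < k"
  using greedy_step_valid(1)[of "greedy_counts i" i] greedy_counts_invariant[of i]
  by (simp add: greedy_group_def)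

lemma greedy_counts_final: "j < k \<Longrightarrow> greedy_counts d j = L j"
proof -
  assume "j < k"
  have le: "\<forall>j<k. greedy_counts d j \<le> L j" and "(\<Sum>j<k. greedy_counts d j) = d"
    using greedy_counts_invariant[of d] by auto
  moreover have "(\<Sum>j<k. L j) = d"
    using sum_capacities by (simp flip: of_nat_sum)
  ultimately have "(\<Sum>j<k. L j - greedy_counts d j) = 0"
    using sum_subtractf_nat[of "{..<k}" "greedy_counts d" L] by simp
  then show ?thesis using le \<open>j < k\<close> by (simp add: le_antisym)
qed

lemma greedy_counts_close:
  assumes "j < k" "m \<le> d"
  shows "\<bar>real (greedy_counts m j) - T j m\<bar> \<le> real k"
proof -
  have upper: "\<forall>j<k. real (greedy_counts m j) \<le> T j m + 1"
    and total: "(\<Sum>j<k. real (greedy_counts m j)) = real m"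
    using greedy_counts_invariant[OF assms(2)] by (auto simp flip: of_nat_sum)
  have "real m - real (greedy_counts m j) = (\<Sum>j'\<in>{..<k} - {j}. real (greedy_counts m j'))"
    using total assms(1) sum.remove[of "{..<k}" j "\<lambda>j'. real (greedy_counts m j')"] by simp
  also have "\<dots> \<le> (\<Sum>j'\<in>{..<k} - {j}. T j' m + 1)"
    using upper by (intro sum_mono) auto
  also have "\<dots> = real m - T j m + real (k - 1)"
    using sum_targets[OF assms(2)] assms(1) sum.remove[of "{..<k}" j "\<lambda>j'. T j' m"]
    by (simp add: sum.distrib)
  finally show ?thesis using upper assms(1) by (auto simp: of_nat_diff)
qed

end

theorem greedy_rounding:
  fixes T :: "nat \<Rightarrow> nat \<Rightarrow> real"
  assumes "\<And>i. i \<le> d \<Longrightarrow> (\<Sum>j<k. T j i) = real i"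
    and "\<And>j i. j < k \<Longrightarrow> i < d \<Longrightarrow> T j i \<le> T j (Suc i)"
    and "\<And>j. j < k \<Longrightarrow> T j d = real (L j)"
    and "\<And>j. j < k \<Longrightarrow> T j 0 = 0"
  shows "\<exists>g. (\<forall>i<d. g i < k) \<and> (\<forall>j<k. card {i. i < d \<and> g i = j} = L j) \<and>
     (\<forall>j<k. \<forall>m\<le>d. \<bar>real (card {i. i < m \<and> g i = j}) - T j m\<bar> \<le> real k)"
proof -
  interpret rounding_targets k d T L by standard (use assms in auto)
  show ?thesis
    by (intro exI[of _ greedy_group])
      (auto simp: greedy_group_less greedy_counts_final greedy_counts_close
        simp flip: greedy_counts_eq_card)
qed

section \<open>Splitting a list according to an assignment of its positions\<close>

definition part_of_list :: "'a list \<Rightarrow> (nat \<Rightarrow> nat) \<Rightarrow> nat \<Rightarrow> 'a multiset" where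
  "part_of_list xs g j = mset (map (nth xs) (filter (\<lambda>i. g i = j) [0..<length xs]))"

lemma length_filter_upt: "length (filter P [0..<n]) = card {i. i < n \<and> P i}"
  unfolding length_filter_conv_card by (rule arg_cong[where f = card]) auto

lemma size_part_of_list: "size (part_of_list xs g j) = card {i. i < length xs \<and> g i = j}"
  by (simp add: part_of_list_def length_filter_upt)

lemma sum_mset_filter_partition:
  assumes "\<And>i. i \<in> set ns \<Longrightarrow> g i < (k::nat)"
  shows "(\<Sum>j<k. mset (filter (\<lambda>i. g i = j) ns)) = mset ns"
  using assms
proof (induction ns)
  case (Cons i ns)
  have "(\<Sum>j<k. mset (filter (\<lambda>i'. g i' = j) (i # ns)))
      = (\<Sum>j<k. (if g i = j then {#i#} else {#}) + mset (filter (\<lambda>i'. g i' = j) ns))"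
    by (intro sum.cong) auto
  also have "\<dots> = (\<Sum>j<k. (if g i = j then {#i#} else {#})) + (\<Sum>j<k. mset (filter (\<lambda>i'. g i' = j) ns))"
    by (simp add: sum.distrib)
  also have "(\<Sum>j<k. (if g i = j then {#i#} else {#})) = {#i#}"
    using Cons.prems[of i] by (simp add: sum.delta)
  finally show ?case using Cons by simp
qed simp

lemma image_mset_sum: "image_mset f (\<Sum>j\<in>J. A j) = (\<Sum>j\<in>J. image_mset f (A j))"
  by (induction J rule: infinite_finite_induct) auto

lemma sum_part_of_list:
  assumes "\<And>i. i < length xs \<Longrightarrow> g i < (k::nat)"
  shows "(\<Sum>j<k. part_of_list xs g j) = mset xs"
proof -
  have "(\<Sum>j<k. part_of_list xs g j)
      = image_mset (nth xs) (\<Sum>j<k. mset (filter (\<lambda>i. g i = j) [0..<length xs]))"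
    by (simp add: part_of_list_def image_mset_sum)
  also have "\<dots> = image_mset (nth xs) (mset [0..<length xs])"
    using assms by (subst sum_mset_filter_partition) auto
  also have "\<dots> = mset xs" by (metis map_nth mset_map)
  finally show ?thesis .
qed

lemma sorted_indices_le:
  fixes xs :: "'a::linorder list"
  assumes "sorted xs"
  shows "{i. i < length xs \<and> xs ! i \<le> x} = {..<length (filter (\<lambda>v. v \<le> x) xs)}"
proof -
  define S where "S = {i. i < length xs \<and> xs ! i \<le> x}"
  have down: "i \<in> S" if "i' \<in> S" "i \<le> i'" for i i'
    using that sorted_nth_mono[OF assms, of i i'] by (auto simp: S_def)
  have "S = {..<card S}"
  proof (cases "S = {}")
    case False
    have "finite S" by (simp add: S_def)
    then have "S = {..Max S}"
      using False down[OF Max_in] by (auto intro: Max_ge)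
    then show ?thesis by (metis card_atMost lessThan_Suc_atMost)
  qed simp
  also have "card S = length (filter (\<lambda>v. v \<le> x) xs)"
    by (simp add: S_def length_filter_conv_card)
  finally show ?thesis by (simp add: S_def)
qed

lemma count_le_part_of_sorted_list:
  fixes xs :: "'a::linorder list"
  assumes "sorted xs"
  shows "size (filter_mset (\<lambda>v. v \<le> x) (part_of_list xs g j))
       = card {i. i < length (filter (\<lambda>v. v \<le> x) xs) \<and> g i = j}"
proof -
  have "size (filter_mset (\<lambda>v. v \<le> x) (part_of_list xs g j))
      = length (filter (\<lambda>v. v \<le> x) (map (nth xs) (filter (\<lambda>i. g i = j) [0..<length xs])))"
    by (simp only: part_of_list_def mset_filter[symmetric] size_mset)
  also have "\<dots> = card {i. i < length xs \<and> g i = j \<and> xs ! i \<le> x}"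
    by (simp add: filter_map o_def conj_commute filter_filter length_filter_upt)
  also have "{i. i < length xs \<and> g i = j \<and> xs ! i \<le> x}
      = {i. i \<in> {i. i < length xs \<and> xs ! i \<le> x} \<and> g i = j}"
    by auto
  finally show ?thesis unfolding sorted_indices_le[OF assms] by simp
qed

section \<open>Splitting a finite mixture of distributions\<close>

lemma (in finite_borel_measure) cdf_eq_measure_lessThan_plus_atom:
  "cdf M y = measure M {..<y} + measure M {y}"
proof -
  have "measure M ({..<y} \<union> {y}) = measure M {..<y} + measure M {y}"
    by (rule finite_measure_Union) auto
  moreover have "{..y} = {..<y} \<union> {y}" by auto
  ultimately show ?thesis by (simp add: cdf_def)
qed

lemma (in finite_measure) measure_le_integral_of_indicator_le:
  assumes "\<phi> \<in> borel_measurable M" "\<And>x. 0 \<le> \<phi> x \<and> \<phi> x \<le> 1"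
    "\<And>x. x \<in> S \<Longrightarrow> \<phi> x = 1" "S \<in> sets M"
  shows "measure M S \<le> (\<integral>x. \<phi> x \<partial>M)"
proof -
  have "integrable M \<phi>"
    using assms(1,2) by (intro integrable_const_bound[where B = 1]) auto
  moreover have "integrable M (indicator S :: 'a \<Rightarrow> real)"
    using assms(4) emeasure_finite[of S] by (intro integrable_real_indicator) (auto simp: less_top[symmetric])
  ultimately have "(\<integral>x. indicator S x \<partial>M) \<le> (\<integral>x. \<phi> x \<partial>M)"
    using assms(2,3) by (intro integral_mono) (auto split: split_indicator)
  then show ?thesis using assms(4) by simp
qed

locale finite_mixture =
  fixes k :: nat and M :: "nat \<Rightarrow> real measure"
  assumes k_pos: "k > 0"
    and real_distribution_component: "\<And>j. j < k \<Longrightarrow> real_distribution (M j)"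
begin

definition mix_cdf :: "real \<Rightarrow> real" where
  "mix_cdf x = (\<Sum>j<k. cdf (M j) x) / k"

definition mix_below :: "real \<Rightarrow> real" where
  "mix_below y = (\<Sum>j<k. measure (M j) {..<y}) / k"

definition mix_atom :: "real \<Rightarrow> real" where
  "mix_atom y = (\<Sum>j<k. measure (M j) {y}) / k"

definition mix_quantile :: "real \<Rightarrow> real" where
  "mix_quantile t = Inf {x. t \<le> mix_cdf x}"

definition mix_integral :: "(real \<Rightarrow> real) \<Rightarrow> real" where
  "mix_integral \<phi> = (\<Sum>j<k. \<integral>x. \<phi> x \<partial>M j) / k"

definition atom_fraction :: "real \<Rightarrow> real" where
  "atom_fraction t = (t - mix_below (mix_quantile t)) / mix_atom (mix_quantile t)"

text \<open>The share of component \<open>j\<close> in the lowest \<open>t\<close>-fraction of the mixture: its mass strictly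
  below the \<open>t\<close>-quantile, plus the fraction of its atom at the quantile that is common to all
  components and makes the shares add up to \<open>t\<close>. Without an atom, \<open>atom_fraction\<close> is the junk
  value \<open>x / 0 = 0\<close>, which is harmless.\<close>

definition share :: "nat \<Rightarrow> real \<Rightarrow> real" where
  "share j t = (if t \<le> 0 then 0 else if 1 \<le> t then 1 / k else
      measure (M j) {..<mix_quantile t} / k + atom_fraction t * (measure (M j) {mix_quantile t} / k))"

lemma finite_borel_measure_component: "j < k \<Longrightarrow> finite_borel_measure (M j)"
  using real_distribution_component real_distribution.finite_borel_measure_M by blast

sublocale mix_cdf: right_continuous_mono mix_cdf 0 1
proof
  fix x
  show "continuous (at_right x) mix_cdf" unfolding mix_cdf_def
    by (intro continuous_divide continuous_sum continuous_const) (use k_pos in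
        \<open>auto intro: finite_borel_measure.cdf_is_right_cont[OF finite_borel_measure_component]\<close>)
next
  show "mono mix_cdf" unfolding mix_cdf_def
    by (intro monoI divide_right_mono sum_mono)
      (auto intro: finite_borel_measure.cdf_nondecreasing[OF finite_borel_measure_component])
next
  have "((\<lambda>x. (\<Sum>j<k. cdf (M j) x) / k) \<longlongrightarrow> (\<Sum>j<k. 0) / k) at_bot"
    by (intro tendsto_divide tendsto_sum tendsto_const) (use k_pos in
        \<open>auto intro: finite_borel_measure.cdf_lim_at_bot[OF finite_borel_measure_component]\<close>)
  then show "(mix_cdf \<longlongrightarrow> 0) at_bot" by (simp add: mix_cdf_def[abs_def])
next
  have "((\<lambda>x. (\<Sum>j<k. cdf (M j) x) / k) \<longlongrightarrow> (\<Sum>j<k. 1) / k) at_top"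
    by (intro tendsto_divide tendsto_sum tendsto_const) (use k_pos in
        \<open>auto intro: real_distribution.cdf_lim_at_top_prob[OF real_distribution_component]\<close>)
  then show "(mix_cdf \<longlongrightarrow> 1) at_top" using k_pos by (simp add: mix_cdf_def[abs_def])
qed

lemma le_mix_cdf_iff: "0 < t \<Longrightarrow> t < 1 \<Longrightarrow> t \<le> mix_cdf x \<longleftrightarrow> mix_quantile t \<le> x"
  unfolding mix_quantile_def by (rule mix_cdf.pseudoinverse)

lemma le_mix_cdf_quantile: "0 < t \<Longrightarrow> t < 1 \<Longrightarrow> t \<le> mix_cdf (mix_quantile t)"
  using le_mix_cdf_iff by auto

lemma mix_quantile_mono: "0 < s \<Longrightarrow> s \<le> t \<Longrightarrow> t < 1 \<Longrightarrow> mix_quantile s \<le> mix_quantile t"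
  using mix_cdf.mono_I unfolding mix_quantile_def mono_on_def by auto

lemma mix_cdf_eq_below_plus_atom: "mix_cdf y = mix_below y + mix_atom y"
  unfolding mix_cdf_def mix_below_def mix_atom_def
  by (simp add: finite_borel_measure.cdf_eq_measure_lessThan_plus_atom[OF
        finite_borel_measure_component] sum.distrib add_divide_distrib)

lemma mix_cdf_tendsto_at_left: "(mix_cdf \<longlongrightarrow> mix_below y) (at_left y)"
  unfolding mix_cdf_def[abs_def] mix_below_def
  by (intro tendsto_divide tendsto_sum tendsto_const)
    (use k_pos in \<open>auto intro: finite_borel_measure.cdf_at_left[OF finite_borel_measure_component]\<close>)

lemma mix_below_quantile_le: "0 < t \<Longrightarrow> t < 1 \<Longrightarrow> mix_below (mix_quantile t) \<le> t"
proof -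
  assume t: "0 < t" "t < 1"
  have "mix_cdf x \<le> t" if "x < mix_quantile t" for x
    using le_mix_cdf_iff[OF t, of x] that by auto
  then have "eventually (\<lambda>x. mix_cdf x \<le> t) (at_left (mix_quantile t))"
    unfolding eventually_at_left_field by (intro exI[of _ "mix_quantile t - 1"]) auto
  then show ?thesis by (rule tendsto_upperbound[OF mix_cdf_tendsto_at_left]) simp
qed

lemma mix_atom_nonneg: "0 \<le> mix_atom y"
  by (simp add: mix_atom_def sum_nonneg)

lemma atom_fraction_bounds:
  assumes "0 < t" "t < 1"
  shows "0 \<le> atom_fraction t" "atom_fraction t \<le> 1"
  using mix_below_quantile_le[OF assms] le_mix_cdf_quantile[OF assms] mix_atom_nonneg
  by (auto simp: atom_fraction_def mix_cdf_eq_below_plus_atom divide_le_eq_1)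

lemma sum_share: "0 \<le> t \<Longrightarrow> t \<le> 1 \<Longrightarrow> (\<Sum>j<k. share j t) = t"
proof -
  assume "0 \<le> t" "t \<le> 1"
  then consider "t = 0" | "t = 1" | "0 < t \<and> t < 1" by linarith
  then show ?thesis
  proof cases
    case 3
    define y where "y = mix_quantile t"
    have "(\<Sum>j<k. share j t) = mix_below y + atom_fraction t * mix_atom y"
      using 3 by (simp add: share_def y_def mix_below_def mix_atom_def sum.distrib
          sum_divide_distrib sum_distrib_left)
    also have "\<dots> = t"
      using mix_below_quantile_le[of t] le_mix_cdf_quantile[of t] mix_cdf_eq_below_plus_atom[of y] 3
      by (cases "mix_atom y = 0") (simp_all add: y_def atom_fraction_def)
    finally show ?thesis .
  qed (use k_pos in \<open>simp_all add: share_def\<close>)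
qed

lemma share_bounds_quantile:
  assumes "j < k" "0 < t" "t < 1"
  shows "measure (M j) {..<mix_quantile t} / k \<le> share j t"
    "share j t \<le> cdf (M j) (mix_quantile t) / k"
proof -
  have atom: "0 \<le> measure (M j) {mix_quantile t} / k" by simp
  have "0 \<le> atom_fraction t * (measure (M j) {mix_quantile t} / k)"
    "atom_fraction t * (measure (M j) {mix_quantile t} / k) \<le> measure (M j) {mix_quantile t} / k"
    using atom_fraction_bounds[OF assms(2,3)] mult_right_mono[OF _ atom, of _ 1] by simp_all
  then show "measure (M j) {..<mix_quantile t} / k \<le> share j t"
    "share j t \<le> cdf (M j) (mix_quantile t) / k"
    using assms by (auto simp: share_def add_divide_distrib
        finite_borel_measure.cdf_eq_measure_lessThan_plus_atom[OF finite_borel_measure_component])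
qed

lemma share_nonneg: "j < k \<Longrightarrow> 0 \<le> share j t"
  using share_bounds_quantile[of j t] by (cases "t \<le> 0 \<or> 1 \<le> t") (auto simp: share_def)

lemma share_le:
  assumes "j < k"
  shows "share j t \<le> 1 / k"
proof (cases "t \<le> 0 \<or> 1 \<le> t")
  case False
  then have "share j t \<le> cdf (M j) (mix_quantile t) / k"
    using share_bounds_quantile(2)[OF assms] by auto
  also have "\<dots> \<le> 1 / k"
    using real_distribution.cdf_bounded_prob[OF real_distribution_component[OF assms]]
    by (simp add: divide_right_mono)
  finally show ?thesis .
qed (auto simp: share_def)

lemma share_mono_interior:
  assumes "j < k" "0 < s" "s \<le> t" "t < 1"
  shows "share j s \<le> share j t"
proof -
  consider "mix_quantile s = mix_quantile t" | "mix_quantile s < mix_quantile t"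
    using mix_quantile_mono[OF assms(2-4)] by linarith
  then show ?thesis
  proof cases
    case 1
    have "atom_fraction s \<le> atom_fraction t"
      using assms(3) 1 mix_atom_nonneg by (simp add: atom_fraction_def divide_right_mono)
    then have "atom_fraction s * (measure (M j) {mix_quantile t} / k)
        \<le> atom_fraction t * (measure (M j) {mix_quantile t} / k)"
      by (rule mult_right_mono) simp
    then show ?thesis using assms 1 by (simp add: share_def)
  next
    case 2
    interpret finite_borel_measure "M j" by (rule finite_borel_measure_component) fact
    have "share j s \<le> cdf (M j) (mix_quantile s) / k"
      using share_bounds_quantile[of j s] assms by auto
    also have "\<dots> \<le> measure (M j) {..<mix_quantile t} / k"
      unfolding cdf_def using 2 by (intro divide_right_mono finite_measure_mono) auto
    also have "\<dots> \<le> share j t"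
      using share_bounds_quantile[of j t] assms by auto
    finally show ?thesis .
  qed
qed

lemma share_mono: "j < k \<Longrightarrow> s \<le> t \<Longrightarrow> share j s \<le> share j t"
  using share_mono_interior[of j s t] share_nonneg[of j t] share_le[of j s]
  by (cases "s \<le> 0 \<or> 1 \<le> t") (auto simp: share_def)

lemma share_diff_le:
  assumes "j < k" "0 \<le> s" "s \<le> t" "t \<le> 1"
  shows "share j t - share j s \<le> t - s"
proof -
  have "t - s = (\<Sum>j'<k. share j' t - share j' s)"
    using assms by (simp add: sum_share sum_subtractf)
  also have "\<dots> = (share j t - share j s) + (\<Sum>j'\<in>{..<k} - {j}. share j' t - share j' s)"
    using assms(1) by (subst sum.remove[of _ j]) auto
  also have "(\<Sum>j'\<in>{..<k} - {j}. share j' t - share j' s) \<ge> 0"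
    using share_mono assms by (intro sum_nonneg) auto
  ultimately show ?thesis by linarith
qed

text \<open>Shares are constant outside \<open>[0, 1]\<close>, so it suffices to clamp the arguments.\<close>

lemma share_lipschitz: "j < k \<Longrightarrow> \<bar>share j t - share j s\<bar> \<le> \<bar>t - s\<bar>"
proof -
  assume j: "j < k"
  define clamp :: "real \<Rightarrow> real" where "clamp t = max 0 (min 1 t)" for t
  have share_clamp: "share j (clamp t) = share j t" for t
    by (auto simp: share_def clamp_def)
  have *: "\<bar>share j t - share j s\<bar> \<le> t - s" if "s \<le> t" for s t
  proof -
    have "clamp s \<le> clamp t" "clamp t - clamp s \<le> t - s" "0 \<le> clamp s" "clamp t \<le> 1"
      using that by (auto simp: clamp_def)
    then show ?thesis
      using share_diff_le[OF j, of "clamp s" "clamp t"] share_mono[OF j \<open>clamp s \<le> clamp t\<close>]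
      by (simp add: share_clamp)
  qed
  show ?thesis using *[of s t] *[of t s] by (cases "s \<le> t") (auto simp: abs_minus_commute)
qed

lemma isCont_share: "j < k \<Longrightarrow> isCont (share j) x"
proof -
  assume "j < k"
  have "lipschitz_on 1 UNIV (share j)"
    by (rule lipschitz_onI) (use share_lipschitz[OF \<open>j < k\<close>] in \<open>auto simp: dist_real_def\<close>)
  then show ?thesis
    using lipschitz_on_continuous_on continuous_on_eq_continuous_at by blast
qed

lemma component_cdf_quantile_mix_cdf:
  assumes "j < k" "0 < mix_cdf x" "mix_cdf x < 1"
  shows "cdf (M j) (mix_quantile (mix_cdf x)) = cdf (M j) x"
proof -
  define y where "y = mix_quantile (mix_cdf x)"
  have "y \<le> x" using le_mix_cdf_iff[OF assms(2,3), of x] by (simp add: y_def)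
  have cdf_mono: "cdf (M j') y \<le> cdf (M j') x" if "j' < k" for j'
    using finite_borel_measure.cdf_nondecreasing[OF finite_borel_measure_component[OF that] \<open>y \<le> x\<close>] .
  have "mix_cdf x \<le> mix_cdf y" using le_mix_cdf_quantile[OF assms(2,3)] by (simp add: y_def)
  then have "(\<Sum>j'<k. cdf (M j') x - cdf (M j') y) \<le> 0"
    using k_pos by (simp add: mix_cdf_def sum_subtractf divide_right_mono_neg divide_le_cancel)
  then have "\<forall>j'\<in>{..<k}. cdf (M j') x - cdf (M j') y = 0"
    using sum_nonneg_eq_0_iff[of "{..<k}" "\<lambda>j'. cdf (M j') x - cdf (M j') y"] cdf_mono
    by (metis (no_types, lifting) diff_ge_0_iff_ge finite_lessThan lessThan_iff order_antisym sum_nonneg)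
  then show ?thesis using assms(1) by (simp add: y_def)
qed

lemma component_cdf_eq_0:
  assumes "j < k" "mix_cdf x \<le> 0"
  shows "cdf (M j) x = 0"
proof -
  have "(\<Sum>j<k. cdf (M j) x) \<le> 0" using assms(2) k_pos by (simp add: mix_cdf_def divide_le_0_iff)
  then show ?thesis
    using sum_nonneg_eq_0_iff[of "{..<k}" "\<lambda>j. cdf (M j) x"] assms(1)
    by (metis (no_types, lifting) antisym cdf_def finite_lessThan lessThan_iff measure_nonneg sum_nonneg)
qed

lemma component_cdf_eq_1:
  assumes "j < k" "1 \<le> mix_cdf x"
  shows "cdf (M j) x = 1"
proof -
  have le_1: "cdf (M j') x \<le> 1" if "j' < k" for j'
    using real_distribution.cdf_bounded_prob[OF real_distribution_component[OF that]] .
  have "(\<Sum>j<k. 1 - cdf (M j) x) \<le> 0"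
    using assms(2) k_pos by (simp add: mix_cdf_def le_divide_eq sum_subtractf)
  then have "1 - cdf (M j) x = 0"
    using sum_nonneg_eq_0_iff[of "{..<k}" "\<lambda>j. 1 - cdf (M j) x"] le_1 assms(1)
    by (metis (no_types, lifting) antisym diff_ge_0_iff_ge finite_lessThan lessThan_iff sum_nonneg)
  then show ?thesis by simp
qed

lemma share_mix_cdf_interior:
  assumes "j < k" "0 < mix_cdf x" "mix_cdf x < 1"
  shows "share j (mix_cdf x) = cdf (M j) x / k"
proof -
  define y where "y = mix_quantile (mix_cdf x)"
  have "(\<Sum>j'<k. cdf (M j') y) = (\<Sum>j'<k. cdf (M j') x)"
    using component_cdf_quantile_mix_cdf assms(2,3) unfolding y_def by (intro sum.cong) auto
  then have "mix_cdf x = mix_cdf y" by (simp add: mix_cdf_def)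
  then have below_atom: "mix_cdf x = mix_below y + mix_atom y"
    by (simp add: mix_cdf_eq_below_plus_atom)
  have "atom_fraction (mix_cdf x) * measure (M j) {y} = measure (M j) {y}"
  proof (cases "mix_atom y = 0")
    case True
    then have "measure (M j) {y} = 0"
      using sum_nonneg_eq_0_iff[of "{..<k}" "\<lambda>j'. measure (M j') {y}"] assms(1) k_pos
      by (simp add: mix_atom_def)
    then show ?thesis by simp
  next
    case False
    have "atom_fraction (mix_cdf x) = mix_atom y / mix_atom y"
      unfolding atom_fraction_def y_def[symmetric] using below_atom by simp
    then show ?thesis using False by simp
  qed
  then have "share j (mix_cdf x) = cdf (M j) y / k"
    using assms(2,3) by (simp add: share_def y_def add_divide_distrib
        finite_borel_measure.cdf_eq_measure_lessThan_plus_atom[OF finite_borel_measure_component[OF assms(1)]])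
  then show ?thesis using component_cdf_quantile_mix_cdf[OF assms] by (simp add: y_def)
qed

lemma share_mix_cdf: "j < k \<Longrightarrow> share j (mix_cdf x) = cdf (M j) x / k"
  using component_cdf_eq_0[of j x] component_cdf_eq_1[of j x] share_mix_cdf_interior[of j x]
  by (cases "mix_cdf x \<le> 0 \<or> 1 \<le> mix_cdf x") (auto simp: share_def)

lemma mix_cdf_diff:
  assumes "u < v"
  shows "mix_cdf v - mix_cdf u = (\<Sum>j<k. measure (M j) {u<..v}) / k"
proof -
  have "(\<Sum>j<k. measure (M j) {u<..v}) = (\<Sum>j<k. cdf (M j) v - cdf (M j) u)"
    using finite_borel_measure.cdf_diff_eq[OF finite_borel_measure_component assms] by simp
  then show ?thesis by (simp add: mix_cdf_def sum_subtractf diff_divide_distrib)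
qed

lemma mix_cdf_diff_le_mix_integral:
  assumes "u < v" "continuous_on UNIV \<phi>" "\<And>x. 0 \<le> \<phi> x \<and> \<phi> x \<le> 1"
    "\<And>x. x \<in> {u<..v} \<Longrightarrow> \<phi> x = 1"
  shows "mix_cdf v - mix_cdf u \<le> mix_integral \<phi>"
proof -
  have "measure (M j) {u<..v} \<le> (\<integral>x. \<phi> x \<partial>M j)" if "j < k" for j
  proof -
    interpret finite_borel_measure "M j" by (rule finite_borel_measure_component) fact
    have "\<phi> \<in> borel_measurable (M j)"
      using borel_measurable_continuous_onI[OF assms(2)] measurable_cong_sets[OF M_is_borel refl]
      by blast
    then show ?thesis
      using assms(3,4) by (intro measure_le_integral_of_indicator_le) auto
  qed
  then show ?thesis
    unfolding mix_cdf_diff[OF assms(1)] mix_integral_def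
    by (intro divide_right_mono sum_mono) auto
qed

end

section \<open>Counting the elements of a sequence of multisets below a level\<close>

definition plateau :: "real \<Rightarrow> real \<Rightarrow> real \<Rightarrow> real \<Rightarrow> real" where
  "plateau \<delta> u v x = max 0 (min 1 (min ((x - u) / \<delta> + 1) ((v - x) / \<delta> + 1)))"

lemma continuous_on_plateau: "0 < \<delta> \<Longrightarrow> continuous_on A (plateau \<delta> u v)"
  unfolding plateau_def[abs_def] by (intro continuous_intros) simp_all

lemma plateau_bounds: "0 \<le> plateau \<delta> u v x \<and> plateau \<delta> u v x \<le> 1"
  by (simp add: plateau_def)

lemma plateau_eq_1: "0 < \<delta> \<Longrightarrow> u \<le> x \<Longrightarrow> x \<le> v \<Longrightarrow> plateau \<delta> u v x = 1"
  by (simp add: plateau_def)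

lemma plateau_eq_0:
  assumes "0 < \<delta>" "x \<le> u - \<delta> \<or> v + \<delta> \<le> x"
  shows "plateau \<delta> u v x = 0"
proof -
  have "(x - u) / \<delta> \<le> -1" if "x \<le> u - \<delta>"
    using that assms(1) by (simp add: divide_le_eq)
  moreover have "(v - x) / \<delta> \<le> -1" if "v + \<delta> \<le> x"
    using that assms(1) by (simp add: divide_le_eq)
  ultimately show ?thesis using assms(2) by (auto simp: plateau_def)
qed

lemma bounded_support_plateau:
  assumes "0 < \<delta>"
  shows "bounded {x. plateau \<delta> u v x \<noteq> 0}"
proof (rule bounded_subset[OF bounded_closed_interval[of "u - \<delta>" "v + \<delta>"]], rule subsetI)
  fix x assume "x \<in> {x. plateau \<delta> u v x \<noteq> 0}"
  then have "\<not> (x \<le> u - \<delta> \<or> v + \<delta> \<le> x)" using plateau_eq_0[OF assms] by auto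
  then show "x \<in> {u - \<delta>..v + \<delta>}" by simp
qed

lemma real_size_filter_mset: "real (size (filter_mset P A)) = (\<Sum>x\<in>#A. if P x then 1 else 0)"
  by (induction A) auto

lemma of_real_sum_mset: "of_real (\<Sum>x\<in>#A. f x) = (\<Sum>x\<in>#A. of_real (f x) :: 'a::real_algebra_1)"
  by (induction A) auto

lemma eventually_nonempty_if_size_at_top:
  "filterlim (\<lambda>n. size (A n)) at_top sequentially \<Longrightarrow> eventually (\<lambda>n. A n \<noteq> {#}) sequentially"
  unfolding filterlim_at_top by (auto elim: eventually_mono[OF spec[of _ 1]])

locale mixture_sequence = finite_mixture +
  fixes Lam :: "nat \<Rightarrow> real multiset"
  assumes size_at_top: "filterlim (\<lambda>n. size (Lam n)) at_top sequentially"
    and test_function_tendsto: "\<And>\<phi>. continuous_on UNIV \<phi> \<Longrightarrow> bounded {x. \<phi> x \<noteq> 0} \<Longrightarrow>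
       (\<lambda>n. (\<Sum>x\<in>#Lam n. \<phi> x) / size (Lam n)) \<longlonglongrightarrow> mix_integral \<phi>"
begin

definition count_le :: "nat \<Rightarrow> real \<Rightarrow> nat" where
  "count_le n y = size (filter_mset (\<lambda>v. v \<le> y) (Lam n))"

lemma count_le_le_size: "count_le n y \<le> size (Lam n)"
  by (simp add: count_le_def)

lemma count_le_mono: "y \<le> x \<Longrightarrow> count_le n y \<le> count_le n x"
proof -
  assume "y \<le> x"
  have "real (count_le n y) \<le> real (count_le n x)"
    unfolding count_le_def real_size_filter_mset using \<open>y \<le> x\<close> by (intro sum_mset_mono) auto
  then show ?thesis by simp
qed

lemma eventually_size_pos: "eventually (\<lambda>n. 0 < size (Lam n)) sequentially"
  using eventually_nonempty_if_size_at_top[OF size_at_top] by (simp add: nonempty_has_size)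

lemma eventually_less_count_le_ratio:
  assumes "a < mix_below y"
  shows "eventually (\<lambda>n. a < count_le n y / size (Lam n)) sequentially"
proof -
  define \<epsilon> where "\<epsilon> = (mix_below y - a) / 2"
  have "\<epsilon> > 0" using assms by (simp add: \<epsilon>_def)
  have "eventually (\<lambda>x. mix_below y - \<epsilon> < mix_cdf x) (at_left y)"
    using \<open>\<epsilon> > 0\<close> by (intro order_tendstoD(1)[OF mix_cdf_tendsto_at_left]) simp
  then obtain v where "v < y" "mix_below y - \<epsilon> < mix_cdf v"
    by (metis eventually_at_left_field dense)
  have "eventually (\<lambda>x. mix_cdf x < \<epsilon> \<and> x < v) at_bot"
    using \<open>\<epsilon> > 0\<close> by (intro eventually_conj order_tendstoD(2)[OF mix_cdf.bot] eventually_gt_at_bot)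
  then obtain u where "u < v" "mix_cdf u < \<epsilon>"
    unfolding eventually_at_bot_linorder by auto
  define \<phi> where "\<phi> = plateau (y - v) u v"
  have "a < mix_cdf v - mix_cdf u"
    using \<open>mix_below y - \<epsilon> < mix_cdf v\<close> \<open>mix_cdf u < \<epsilon>\<close> by (simp add: \<epsilon>_def field_simps)
  also have "\<dots> \<le> mix_integral \<phi>"
    using \<open>u < v\<close> \<open>v < y\<close> unfolding \<phi>_def
    by (intro mix_cdf_diff_le_mix_integral continuous_on_plateau plateau_bounds plateau_eq_1) auto
  finally have "eventually (\<lambda>n. a < (\<Sum>x\<in>#Lam n. \<phi> x) / size (Lam n)) sequentially"
    using \<open>v < y\<close> unfolding \<phi>_def
    by (intro order_tendstoD(1)[OF test_function_tendsto] continuous_on_plateau bounded_support_plateau) auto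
  then show ?thesis
  proof (rule eventually_mono)
    fix n assume "a < (\<Sum>x\<in>#Lam n. \<phi> x) / size (Lam n)"
    moreover have "(\<Sum>x\<in>#Lam n. \<phi> x) \<le> count_le n y"
      unfolding count_le_def real_size_filter_mset using \<open>v < y\<close>
      by (intro sum_mset_mono) (auto simp: \<phi>_def plateau_bounds plateau_eq_0)
    ultimately show "a < count_le n y / size (Lam n)"
      by (meson divide_right_mono less_le_trans of_nat_0_le_iff)
  qed
qed

lemma eventually_count_le_ratio_less:
  assumes "mix_cdf y < a"
  shows "eventually (\<lambda>n. count_le n y / size (Lam n) < a) sequentially"
proof -
  define \<epsilon> where "\<epsilon> = (a - mix_cdf y) / 2"
  have "\<epsilon> > 0" using assms by (simp add: \<epsilon>_def)
  have "(mix_cdf \<longlongrightarrow> mix_cdf y) (at_right y)"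
    using mix_cdf.cont by (simp add: continuous_within)
  from order_tendstoD(2)[OF this, of "mix_cdf y + \<epsilon>"]
  have "eventually (\<lambda>x. mix_cdf x < mix_cdf y + \<epsilon>) (at_right y)"
    using \<open>\<epsilon> > 0\<close> by simp
  then obtain u where "y < u" "mix_cdf u < mix_cdf y + \<epsilon>"
    by (metis eventually_at_right_field dense)
  have "eventually (\<lambda>x. 1 - \<epsilon> < mix_cdf x \<and> u < x) at_top"
    using \<open>\<epsilon> > 0\<close> by (intro eventually_conj order_tendstoD(1)[OF mix_cdf.top] eventually_gt_at_top) simp
  then obtain v where "u < v" "1 - \<epsilon> < mix_cdf v"
    unfolding eventually_at_top_linorder by auto
  define \<phi> where "\<phi> = plateau (u - y) u v"
  have "1 - a < mix_cdf v - mix_cdf u"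
    using \<open>1 - \<epsilon> < mix_cdf v\<close> \<open>mix_cdf u < mix_cdf y + \<epsilon>\<close> by (simp add: \<epsilon>_def field_simps)
  also have "\<dots> \<le> mix_integral \<phi>"
    using \<open>y < u\<close> \<open>u < v\<close> unfolding \<phi>_def
    by (intro mix_cdf_diff_le_mix_integral continuous_on_plateau plateau_bounds plateau_eq_1) auto
  finally have "eventually (\<lambda>n. 1 - a < (\<Sum>x\<in>#Lam n. \<phi> x) / size (Lam n)) sequentially"
    using \<open>y < u\<close> unfolding \<phi>_def
    by (intro order_tendstoD(1)[OF test_function_tendsto] continuous_on_plateau bounded_support_plateau) auto
  with eventually_size_pos show ?thesis
  proof eventually_elim
    case (elim n)
    have "count_le n y + (\<Sum>x\<in>#Lam n. \<phi> x) \<le> (\<Sum>x\<in>#Lam n. 1)"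
      unfolding count_le_def real_size_filter_mset sum_mset.distrib[symmetric] using \<open>y < u\<close>
      by (intro sum_mset_mono) (auto simp: \<phi>_def plateau_bounds plateau_eq_0)
    then have "count_le n y / size (Lam n) + (\<Sum>x\<in>#Lam n. \<phi> x) / size (Lam n) \<le> 1"
      using elim(1) by (simp add: divide_le_eq_1 flip: add_divide_distrib)
    then show ?case using elim by linarith
  qed
qed

lemma count_le_ratio_tendsto:
  assumes "mix_atom y = 0"
  shows "(\<lambda>n. count_le n y / size (Lam n)) \<longlonglongrightarrow> mix_cdf y"
  using eventually_less_count_le_ratio eventually_count_le_ratio_less assms
  by (intro order_tendstoI) (auto simp: mix_cdf_eq_below_plus_atom)

end

section \<open>Partitioning the sorted multisets\<close>

lemma tendsto_at_isCont_if_mono: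
  fixes u :: "nat \<Rightarrow> real \<Rightarrow> real"
  assumes "countable A" "\<And>y. y \<notin> A \<Longrightarrow> (\<lambda>n. u n y) \<longlonglongrightarrow> g y" "\<And>n. mono (u n)" "isCont g x"
  shows "(\<lambda>n. u n x) \<longlonglongrightarrow> g x"
proof (rule order_tendstoI)
  fix a assume "a < g x"
  have "(g \<longlongrightarrow> g x) (at_left x)" using assms(4) by (simp add: isCont_def filterlim_at_split)
  then obtain b where "b < x" "\<And>z. b < z \<Longrightarrow> z < x \<Longrightarrow> a < g z"
    using order_tendstoD(1)[OF _ \<open>a < g x\<close>] by (metis eventually_at_left_field)
  moreover obtain y where "y \<in> {b<..<x}" "y \<notin> A"
    using real_interval_avoid_countable_set[OF \<open>b < x\<close> assms(1)] by blast
  ultimately have "a < g y" by simp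
  then have "eventually (\<lambda>n. a < u n y) sequentially"
    by (rule order_tendstoD(1)[OF assms(2)[OF \<open>y \<notin> A\<close>]])
  then show "eventually (\<lambda>n. a < u n x) sequentially"
    by eventually_elim (metis assms(3) \<open>y \<in> {b<..<x}\<close> greaterThanLessThan_iff less_imp_le less_le_trans monoD)
next
  fix a assume "g x < a"
  have "(g \<longlongrightarrow> g x) (at_right x)" using assms(4) by (simp add: isCont_def filterlim_at_split)
  then obtain b where "x < b" "\<And>z. x < z \<Longrightarrow> z < b \<Longrightarrow> g z < a"
    using order_tendstoD(2)[OF _ \<open>g x < a\<close>] by (metis eventually_at_right_field)
  moreover obtain y where "y \<in> {x<..<b}" "y \<notin> A"
    using real_interval_avoid_countable_set[OF \<open>x < b\<close> assms(1)] by blast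
  ultimately have "g y < a" by simp
  then have "eventually (\<lambda>n. u n y < a) sequentially"
    by (rule order_tendstoD(2)[OF assms(2)[OF \<open>y \<notin> A\<close>]])
  then show "eventually (\<lambda>n. u n x < a) sequentially"
    by eventually_elim (metis assms(3) \<open>y \<in> {x<..<b}\<close> greaterThanLessThan_iff less_imp_le le_less_trans monoD)
qed

locale mixture_partition = mixture_sequence +
  fixes L :: "nat \<Rightarrow> nat \<Rightarrow> nat"
  assumes sum_sizes: "\<And>n. (\<Sum>j<k. L n j) = size (Lam n)"
    and size_ratio_tendsto: "\<And>j. j < k \<Longrightarrow> (\<lambda>n. real (L n j) / real (size (Lam n))) \<longlonglongrightarrow> 1 / real k"
begin

abbreviation d :: "nat \<Rightarrow> nat" where
  "d n \<equiv> size (Lam n)"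

definition size_dev :: "nat \<Rightarrow> real" where
  "size_dev n = (\<Sum>j<k. \<bar>real (L n j) / real (d n) - 1 / k\<bar>)"

definition damping :: "nat \<Rightarrow> real" where
  "damping n = min 1 (k * size_dev n)"

definition excess :: "nat \<Rightarrow> nat \<Rightarrow> real" where
  "excess n j = real (L n j) / real (d n) - (1 - damping n) / k"

text \<open>Damping the shares by \<open>1 - damping n\<close> leaves room for the nonnegative linear term
  \<open>excess n j * t\<close>, which makes the total share of part \<open>j\<close> exactly \<open>L n j / d n\<close>.\<close>

definition target_share :: "nat \<Rightarrow> nat \<Rightarrow> real \<Rightarrow> real" where
  "target_share n j t = (1 - damping n) * share j t + excess n j * t"

definition target :: "nat \<Rightarrow> nat \<Rightarrow> nat \<Rightarrow> real" where
  "target n j i = real (d n) * target_share n j (real i / real (d n))"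

definition error_bound :: "nat \<Rightarrow> real" where
  "error_bound n = k / real (d n) + 2 * damping n + size_dev n"

lemma size_dev_nonneg: "0 \<le> size_dev n"
  by (simp add: size_dev_def sum_nonneg)

lemma damping_bounds: "0 \<le> damping n" "damping n \<le> 1"
  using size_dev_nonneg[of n] by (auto simp: damping_def)

lemma size_ratio_dev_le: "j < k \<Longrightarrow> \<bar>real (L n j) / real (d n) - 1 / k\<bar> \<le> size_dev n"
  unfolding size_dev_def
  by (rule member_le_sum[of j "{..<k}" "\<lambda>j. \<bar>real (L n j) / real (d n) - 1 / k\<bar>"]) auto

lemma excess_nonneg:
  assumes "j < k"
  shows "0 \<le> excess n j"
proof (cases "damping n = 1")
  case False
  then have "damping n / k = size_dev n" using k_pos by (auto simp: damping_def min_def)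
  then show ?thesis using size_ratio_dev_le[OF assms, of n] by (simp add: excess_def diff_divide_distrib)
qed (simp add: excess_def)

lemma sum_excess: "0 < d n \<Longrightarrow> (\<Sum>j<k. excess n j) = damping n"
  using sum_sizes[of n] k_pos
  by (simp add: excess_def sum_subtractf nonempty_has_size flip: sum_divide_distrib of_nat_sum)

lemma abs_excess_le: "j < k \<Longrightarrow> \<bar>excess n j\<bar> \<le> size_dev n + damping n"
proof -
  assume "j < k"
  have "excess n j = (real (L n j) / real (d n) - 1 / k) + damping n / k"
    by (simp add: excess_def diff_divide_distrib)
  moreover have "0 \<le> damping n / k" "damping n / k \<le> damping n"
    using k_pos damping_bounds(1)[of n] by (simp_all add: divide_le_eq mult_le_cancel_left1)
  ultimately show ?thesis
    using size_ratio_dev_le[OF \<open>j < k\<close>, of n] by (auto simp: abs_le_iff)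
qed

lemma target_share_mono:
  assumes "j < k" "0 < d n" "s \<le> t"
  shows "target_share n j s \<le> target_share n j t"
  unfolding target_share_def
  using damping_bounds[of n] share_mono[OF assms(1,3)] excess_nonneg[OF assms(1), of n] assms(3)
  by (intro add_mono mult_left_mono) auto

lemma sum_target_share:
  assumes "0 < d n" "0 \<le> t" "t \<le> 1"
  shows "(\<Sum>j<k. target_share n j t) = t"
proof -
  have "(\<Sum>j<k. target_share n j t) = (1 - damping n) * (\<Sum>j<k. share j t) + (\<Sum>j<k. excess n j) * t"
    by (simp add: target_share_def sum.distrib sum_distrib_left sum_distrib_right)
  then show ?thesis using sum_share[OF assms(2,3)] sum_excess[OF assms(1)] by (simp add: algebra_simps)
qed

lemma target_share_one: "j < k \<Longrightarrow> real (d n) * target_share n j 1 = real (L n j)"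
  using sum_sizes[of n] k_pos
  by (cases "d n = 0") (auto simp: target_share_def share_def excess_def field_simps)

lemma target_share_close:
  assumes "j < k" "0 \<le> t" "t \<le> 1"
  shows "\<bar>target_share n j t - share j t\<bar> \<le> 2 * damping n + size_dev n"
proof -
  have "share j t \<le> 1"
    using share_le[OF assms(1), of t] k_pos by (simp add: divide_le_eq order_trans)
  then have "\<bar>damping n * share j t\<bar> \<le> damping n"
    using damping_bounds share_nonneg[OF assms(1)] by (simp add: abs_mult mult_left_le)
  moreover have "\<bar>excess n j * t\<bar> \<le> \<bar>excess n j\<bar>"
    using assms by (simp add: abs_mult mult_left_le)
  moreover have "target_share n j t - share j t = excess n j * t - damping n * share j t"
    by (simp add: target_share_def algebra_simps)
  ultimately show ?thesis using abs_excess_le[OF assms(1), of n] by linarith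
qed

lemma exists_rounding:
  "\<exists>g. (\<forall>i<d n. g i < k) \<and> (\<forall>j<k. card {i. i < d n \<and> g i = j} = L n j) \<and>
     (\<forall>j<k. \<forall>m\<le>d n. \<bar>real (card {i. i < m \<and> g i = j}) - target n j m\<bar> \<le> real k)"
proof (rule greedy_rounding)
  show "(\<Sum>j<k. target n j i) = real i" if "i \<le> d n" for i
    using that sum_target_share[of n "real i / real (d n)"]
    by (cases "d n = 0") (auto simp: target_def target_share_def share_def simp flip: sum_distrib_left)
  show "target n j i \<le> target n j (Suc i)" if "j < k" "i < d n" for j i
    using that unfolding target_def by (intro mult_left_mono target_share_mono) (auto simp: divide_right_mono)
  show "target n j (d n) = real (L n j)" if "j < k" for j
    using that target_share_one[of j n] sum_sizes[of n] by (cases "d n = 0") (auto simp: target_def)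
  show "target n j 0 = 0" for j
    by (simp add: target_def target_share_def share_def)
qed

definition assignment :: "nat \<Rightarrow> nat \<Rightarrow> nat" where
  "assignment n = (SOME g. (\<forall>i<d n. g i < k) \<and> (\<forall>j<k. card {i. i < d n \<and> g i = j} = L n j) \<and>
     (\<forall>j<k. \<forall>m\<le>d n. \<bar>real (card {i. i < m \<and> g i = j}) - target n j m\<bar> \<le> real k))"

definition part_count :: "nat \<Rightarrow> nat \<Rightarrow> nat \<Rightarrow> nat" where
  "part_count n j m = card {i. i < m \<and> assignment n i = j}"

lemma assignment_less: "i < d n \<Longrightarrow> assignment n i < k"
  and part_count_final: "j < k \<Longrightarrow> part_count n j (d n) = L n j"
  and part_count_close: "j < k \<Longrightarrow> m \<le> d n \<Longrightarrow> \<bar>real (part_count n j m) - target n j m\<bar> \<le> real k"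
  using someI_ex[OF exists_rounding[of n]] unfolding assignment_def[symmetric] part_count_def by blast+

lemma part_count_mono: "m \<le> m' \<Longrightarrow> part_count n j m \<le> part_count n j m'"
  unfolding part_count_def by (rule card_mono) auto

lemma part_count_ratio_close:
  assumes "j < k" "0 < d n" "m \<le> d n"
  shows "\<bar>real (part_count n j m) / real (d n) - share j (real m / real (d n))\<bar> \<le> error_bound n"
proof -
  let ?t = "real m / real (d n)"
  have "real (part_count n j m) / real (d n) - target_share n j ?t
      = (real (part_count n j m) - target n j m) / real (d n)"
    using assms(2) by (auto simp: target_def diff_divide_distrib)
  then have "\<bar>real (part_count n j m) / real (d n) - target_share n j ?t\<bar>
      = \<bar>real (part_count n j m) - target n j m\<bar> / real (d n)"
    by (simp add: abs_divide)
  also have "\<dots> \<le> real k / real (d n)"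
    using part_count_close[OF assms(1,3)] by (simp add: divide_right_mono)
  finally show ?thesis
    using target_share_close[OF assms(1), of ?t n] assms by (simp add: error_bound_def)
qed

lemma size_at_top_real: "filterlim (\<lambda>n. real (d n)) at_top sequentially"
  by (rule filterlim_compose[OF filterlim_real_sequentially size_at_top])

lemma error_bound_tendsto: "error_bound \<longlonglongrightarrow> 0"
proof -
  have "(\<lambda>n. \<Sum>j<k. \<bar>real (L n j) / real (d n) - 1 / k\<bar>) \<longlonglongrightarrow> (\<Sum>j<k. 0)"
    by (intro tendsto_sum tendsto_rabs_zero LIM_zero) (use size_ratio_tendsto in auto)
  then have dev: "size_dev \<longlonglongrightarrow> 0" by (simp add: size_dev_def[abs_def])
  then have "damping \<longlonglongrightarrow> min 1 (real k * 0)"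
    unfolding damping_def[abs_def] by (intro tendsto_min tendsto_const tendsto_mult)
  moreover have "(\<lambda>n. real k / real (d n)) \<longlonglongrightarrow> 0"
    by (rule tendsto_divide_0[OF tendsto_const filterlim_at_top_imp_at_infinity[OF size_at_top_real]])
  ultimately have "error_bound \<longlonglongrightarrow> 0 + 2 * 0 + 0"
    unfolding error_bound_def[abs_def] by (intro tendsto_add tendsto_mult tendsto_const dev) simp_all
  then show ?thesis by simp
qed

lemma part_count_ratio_tendsto_nonatom:
  assumes "j < k" "mix_atom y = 0"
  shows "(\<lambda>n. real (part_count n j (count_le n y)) / real (d n)) \<longlonglongrightarrow> cdf (M j) y / k"
proof -
  let ?t = "\<lambda>n. real (count_le n y) / real (d n)"
  have "(\<lambda>n. share j (?t n)) \<longlonglongrightarrow> share j (mix_cdf y)"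
    by (rule isCont_tendsto_compose[OF isCont_share[OF assms(1)] count_le_ratio_tendsto[OF assms(2)]])
  moreover have "(\<lambda>n. real (part_count n j (count_le n y)) / real (d n) - share j (?t n)) \<longlonglongrightarrow> 0"
  proof (rule Lim_null_comparison[OF _ error_bound_tendsto])
    show "eventually (\<lambda>n. norm (real (part_count n j (count_le n y)) / real (d n) - share j (?t n))
        \<le> error_bound n) sequentially"
      using eventually_size_pos
      by eventually_elim (use part_count_ratio_close[OF assms(1)] count_le_le_size in auto)
  qed
  ultimately have "(\<lambda>n. (real (part_count n j (count_le n y)) / real (d n) - share j (?t n)) + share j (?t n))
      \<longlonglongrightarrow> 0 + share j (mix_cdf y)"
    by (intro tendsto_add)
  then show ?thesis by (simp add: share_mix_cdf[OF assms(1)])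
qed

lemma countable_mix_atoms: "countable {y. mix_atom y \<noteq> 0}"
proof (rule countable_subset)
  show "{y. mix_atom y \<noteq> 0} \<subseteq> (\<Union>j<k. {y. measure (M j) {y} > 0})"
  proof
    fix y assume "y \<in> {y. mix_atom y \<noteq> 0}"
    then have "(\<Sum>j<k. measure (M j) {y}) \<noteq> 0" by (simp add: mix_atom_def)
    then obtain j where "j < k" "measure (M j) {y} \<noteq> 0"
      by (metis lessThan_iff sum.neutral)
    then show "y \<in> (\<Union>j<k. {y. measure (M j) {y} > 0})"
      by (intro UN_I[of j]) (auto simp: order_less_le)
  qed
  show "countable (\<Union>j<k. {y. measure (M j) {y} > 0})"
    by (intro countable_UN) (auto intro: finite_borel_measure.countable_atoms[OF finite_borel_measure_component])
qed

lemma part_count_ratio_tendsto: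
  assumes "j < k" "isCont (cdf (M j)) x"
  shows "(\<lambda>n. real (part_count n j (count_le n x)) / real (d n)) \<longlonglongrightarrow> cdf (M j) x / k"
proof (rule tendsto_at_isCont_if_mono[OF countable_mix_atoms,
      where u = "\<lambda>n y. real (part_count n j (count_le n y)) / real (d n)" and g = "\<lambda>y. cdf (M j) y / k"])
  show "mono (\<lambda>y. real (part_count n j (count_le n y)) / real (d n))" for n
    by (intro monoI divide_right_mono) (auto intro: part_count_mono count_le_mono)
  show "isCont (\<lambda>y. cdf (M j) y / k) x"
    using assms(2) k_pos by (intro continuous_intros) auto
qed (use part_count_ratio_tendsto_nonatom[OF assms(1)] in simp)

lemma part_count_ratio_size_tendsto:
  assumes "j < k" "isCont (cdf (M j)) x"
  shows "(\<lambda>n. real (part_count n j (count_le n x)) / real (L n j)) \<longlonglongrightarrow> cdf (M j) x"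
proof -
  have "(\<lambda>n. (real (part_count n j (count_le n x)) / real (d n)) / (real (L n j) / real (d n)))
      \<longlonglongrightarrow> (cdf (M j) x / k) / (1 / k)"
    using k_pos by (intro tendsto_divide part_count_ratio_tendsto size_ratio_tendsto assms) auto
  moreover have "eventually (\<lambda>n. (real (part_count n j (count_le n x)) / real (d n)) / (real (L n j) / real (d n))
      = real (part_count n j (count_le n x)) / real (L n j)) sequentially"
    using eventually_size_pos by eventually_elim auto
  ultimately show ?thesis
    using k_pos by (simp add: Lim_transform_eventually)
qed

lemma size_part_at_top:
  assumes "j < k"
  shows "filterlim (\<lambda>n. L n j) at_top sequentially"
proof -
  have "filterlim (\<lambda>n. real (L n j) / real (d n) * real (d n)) at_top sequentially"
    using size_ratio_tendsto[OF assms] k_pos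
    by (intro filterlim_tendsto_pos_mult_at_top[OF _ _ size_at_top_real]) auto
  moreover have "eventually (\<lambda>n. real (L n j) / real (d n) * real (d n) = real (L n j)) sequentially"
    using eventually_size_pos by eventually_elim auto
  ultimately show ?thesis
    by (simp add: filterlim_sequentially_iff_filterlim_real filterlim_cong)
qed

definition part :: "nat \<Rightarrow> nat \<Rightarrow> real multiset" where
  "part n = part_of_list (sorted_list_of_multiset (Lam n)) (assignment n)"

lemma sum_parts: "(\<Sum>j<k. part n j) = Lam n"
  unfolding part_def
  by (subst sum_part_of_list) (auto intro: assignment_less simp flip: size_mset)

lemma size_part: "j < k \<Longrightarrow> size (part n j) = L n j"
  using part_count_final by (simp add: part_def size_part_of_list part_count_def flip: size_mset)

lemma part_cdf_tendsto:
  assumes "j < k" "isCont (cdf (M j)) x"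
  shows "(\<lambda>n. real (size (filter_mset (\<lambda>v. v \<le> x) (part n j))) / real (size (part n j)))
    \<longlonglongrightarrow> cdf (M j) x"
proof -
  have "size (filter_mset (\<lambda>v. v \<le> x) (part n j)) = part_count n j (count_le n x)" for n
    unfolding part_def count_le_part_of_sorted_list[OF sorted_sorted_list_of_multiset]
    by (metis part_count_def count_le_def mset_filter mset_sorted_list_of_multiset size_mset)
  then show ?thesis using part_count_ratio_size_tendsto[OF assms] by (simp add: size_part[OF assms(1)])
qed

end

section \<open>Asymptotic distributions as weak limits\<close>

lemma bounded_norm_if_bounded_support:
  fixes F :: "'a::{heine_borel, real_normed_vector} \<Rightarrow> 'b::real_normed_vector"
  assumes "continuous_on UNIV F" "bounded {z. F z \<noteq> 0}"
  obtains B where "\<And>z. norm (F z) \<le> B"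
proof -
  let ?S = "closure {z. F z \<noteq> 0}"
  have "compact (F ` ?S)"
    using assms by (intro compact_continuous_image) (auto simp: compact_closure intro: continuous_on_subset)
  then obtain B where "\<And>z. z \<in> ?S \<Longrightarrow> norm (F z) \<le> B"
    by (meson bounded_iff compact_imp_bounded imageI)
  then have "norm (F z) \<le> max B 0" for z
    by (cases "F z = 0") (auto intro: le_max_iff_disj[THEN iffD2] closure_subset[THEN subsetD])
  then show ?thesis by (rule that)
qed

text \<open>Cutting \<open>h\<close> off outside \<open>[a, b]\<close> makes it measurable under the hypothesis
  \<open>set_borel_measurable lborel {a..b} h\<close>.\<close>

definition image_distribution :: "real \<Rightarrow> real \<Rightarrow> (real \<Rightarrow> real) \<Rightarrow> real measure" where
  "image_distribution a b h =
     distr (uniform_measure lborel {a..b}) borel (\<lambda>x. indicator {a..b} x *\<^sub>R h x)"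

lemma uniform_measure_lborel_Icc:
  assumes "a < b"
  shows "uniform_measure lborel {a..b} = density lborel (\<lambda>x. ennreal (indicator {a..b} x / (b - a)))"
  unfolding uniform_measure_def using assms divide_ennreal[of 1 "b - a"]
  by (intro density_cong) (auto split: split_indicator)

lemma real_distribution_image_distribution:
  assumes "a < b" "set_borel_measurable lborel {a..b} h"
  shows "real_distribution (image_distribution a b h)"
proof -
  interpret prob_space "uniform_measure lborel {a..b}"
    using assms(1) by (intro prob_space_uniform_measure) auto
  show ?thesis
    using assms(2) unfolding image_distribution_def set_borel_measurable_def
    by (intro real_distribution_distr) (simp cong: measurable_cong_sets)
qed

lemma integral_image_distribution:
  fixes F :: "real \<Rightarrow> 'b::{banach, second_countable_topology}"
  assumes "a < b" "set_borel_measurable lborel {a..b} h" "F \<in> borel_measurable borel"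
  shows "(\<integral>y. F y \<partial>image_distribution a b h) = (1 / (b - a)) *\<^sub>R (LINT x:{a..b}|lborel. F (h x))"
proof -
  let ?h = "\<lambda>x. indicator {a..b} x *\<^sub>R h x"
  have h: "?h \<in> borel_measurable lborel"
    using assms(2) by (simp add: set_borel_measurable_def)
  have "(\<integral>y. F y \<partial>image_distribution a b h) = (\<integral>x. F (?h x) \<partial>uniform_measure lborel {a..b})"
    unfolding image_distribution_def using h assms(3) by (intro integral_distr) (simp_all cong: measurable_cong_sets)
  also have "\<dots> = (\<integral>x. (indicator {a..b} x / (b - a)) *\<^sub>R F (?h x) \<partial>lborel)"
    unfolding uniform_measure_lborel_Icc[OF assms(1)] using h assms(1,3)
    by (intro integral_density) (auto split: split_indicator)
  also have "\<dots> = (\<integral>x. (1 / (b - a)) *\<^sub>R (indicator {a..b} x *\<^sub>R F (h x)) \<partial>lborel)"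
    by (intro Bochner_Integration.integral_cong) (auto split: split_indicator)
  also have "\<dots> = (1 / (b - a)) *\<^sub>R (\<integral>x. indicator {a..b} x *\<^sub>R F (h x) \<partial>lborel)"
    by (rule integral_scaleR_right)
  finally show ?thesis by (simp only: set_lebesgue_integral_def)
qed

lemma sum_mset_eq_sum_count:
  fixes f :: "'a \<Rightarrow> 'b::real_vector"
  shows "(\<Sum>x\<in>#A. f x) = (\<Sum>a\<in>set_mset A. real (count A a) *\<^sub>R f a)"
proof (induction A)
  case (add x A)
  let ?S = "insert x (set_mset A)"
  have "(\<Sum>a\<in>?S. real (count (add_mset x A) a) *\<^sub>R f a)
      = (\<Sum>a\<in>?S. real (count A a) *\<^sub>R f a + (if a = x then f a else 0))"
    by (intro sum.cong) (auto simp: scaleR_add_left)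
  also have "\<dots> = (\<Sum>a\<in>?S. real (count A a) *\<^sub>R f a) + f x"
    by (simp add: sum.distrib)
  also have "(\<Sum>a\<in>?S. real (count A a) *\<^sub>R f a) = (\<Sum>a\<in>set_mset A. real (count A a) *\<^sub>R f a)"
    by (rule sum.mono_neutral_right) (auto simp: not_in_iff)
  finally show ?case using add.IH by (simp add: add.commute)
qed simp

definition empirical_measure :: "real multiset \<Rightarrow> real measure" where
  "empirical_measure A = distr (measure_pmf (pmf_of_multiset A)) borel (\<lambda>x. x)"

lemma real_distribution_empirical_measure: "A \<noteq> {#} \<Longrightarrow> real_distribution (empirical_measure A)"
  unfolding empirical_measure_def
  by (intro prob_space.real_distribution_distr[OF prob_space_measure_pmf]) simp

lemma integral_empirical_measure:
  fixes f :: "real \<Rightarrow> 'b::{banach, second_countable_topology}"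
  assumes "A \<noteq> {#}" "f \<in> borel_measurable borel"
  shows "(\<integral>x. f x \<partial>empirical_measure A) = (1 / real (size A)) *\<^sub>R (\<Sum>x\<in>#A. f x)"
proof -
  have "(\<integral>x. f x \<partial>empirical_measure A) = (\<integral>x. f x \<partial>measure_pmf (pmf_of_multiset A))"
    unfolding empirical_measure_def using assms(2) by (intro integral_distr) auto
  also have "\<dots> = (\<Sum>a\<in>set_mset A. pmf (pmf_of_multiset A) a *\<^sub>R f a)"
    using assms(1) by (intro integral_measure_pmf) auto
  also have "\<dots> = (1 / real (size A)) *\<^sub>R (\<Sum>x\<in>#A. f x)"
    using assms(1) by (simp add: sum_mset_eq_sum_count[of f] scaleR_sum_right)
  finally show ?thesis .
qed

lemma cdf_empirical_measure:
  assumes "A \<noteq> {#}"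
  shows "cdf (empirical_measure A) x = real (size (filter_mset (\<lambda>v. v \<le> x) A)) / real (size A)"
proof -
  interpret real_distribution "empirical_measure A"
    by (rule real_distribution_empirical_measure[OF assms])
  have "cdf (empirical_measure A) x = (\<integral>v. indicator {..x} v \<partial>empirical_measure A)"
    by (simp add: cdf_def)
  also have "\<dots> = (1 / real (size A)) *\<^sub>R (\<Sum>v\<in>#A. indicator {..x} v)"
    by (rule integral_empirical_measure[OF assms]) simp
  also have "(\<Sum>v\<in>#A. indicator {..x} v) = (\<Sum>v\<in>#A. if v \<le> x then 1 else (0::real))"
    by (intro arg_cong[where f = sum_mset] image_mset_cong) (auto split: split_indicator)
  finally show ?thesis by (simp add: real_size_filter_mset)
qed

lemma set_integrable_bounded_comp:
  fixes F :: "real \<Rightarrow> 'b::{banach, second_countable_topology}" and h :: "real \<Rightarrow> real"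
  assumes "set_borel_measurable lborel {a..b} h" "F \<in> borel_measurable borel" "\<And>y. norm (F y) \<le> B"
  shows "set_integrable lborel {a..b} (\<lambda>x. F (h x))"
  unfolding set_integrable_def
proof (rule integrableI_bounded_set[where A = "{a..b}" and B = B])
  have "(\<lambda>x. indicator {a..b} x *\<^sub>R F (indicator {a..b} x *\<^sub>R h x)) \<in> borel_measurable lborel"
    using measurable_compose[OF assms(1)[unfolded set_borel_measurable_def] assms(2)]
    by (intro borel_measurable_scaleR borel_measurable_indicator) auto
  then show "(\<lambda>x. indicator {a..b} x *\<^sub>R F (h x)) \<in> borel_measurable lborel"
    by (rule measurable_cong[THEN iffD1, rotated]) (simp split: split_indicator)
qed (use assms(3) in \<open>auto simp: emeasure_lborel_Icc_eq split: split_indicator\<close>)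

lemma asym_distr_limit_eq:
  fixes F :: "complex \<Rightarrow> complex" and fs :: "nat \<Rightarrow> real \<Rightarrow> real"
  assumes "a < b" "\<And>j. j < k \<Longrightarrow> set_borel_measurable lborel {a..b} (fs j)"
    and "continuous_on UNIV F" "bounded_support F"
  shows "of_real (1 / (b - a)) * (LINT x:{a..b}|lborel. (1 / of_nat k) * (\<Sum>j<k. F (of_real (fs j x))))
       = (\<Sum>j<k. \<integral>y. F (of_real y) \<partial>image_distribution a b (fs j)) / of_nat k"
proof -
  obtain B where B: "\<And>z. norm (F z) \<le> B"
    using bounded_norm_if_bounded_support assms(3,4) unfolding bounded_support_def by blast
  have F_meas: "(\<lambda>y. F (of_real y)) \<in> borel_measurable borel"
    using assms(3) by (intro borel_measurable_continuous_onI continuous_on_compose2[OF assms(3)])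
      (auto intro: continuous_intros)
  have "set_integrable lborel {a..b} (\<lambda>x. F (of_real (fs j x)))" if "j < k" for j
    using set_integrable_bounded_comp[OF assms(2)[OF that] F_meas] B by blast
  then have sum_lint: "(LINT x:{a..b}|lborel. (\<Sum>j<k. F (of_real (fs j x))))
      = (\<Sum>j<k. LINT x:{a..b}|lborel. F (of_real (fs j x)))"
    unfolding set_integrable_def set_lebesgue_integral_def scaleR_sum_right
    by (intro Bochner_Integration.integral_sum) auto
  have "of_real (1 / (b - a)) * (LINT x:{a..b}|lborel. (1 / of_nat k) * (\<Sum>j<k. F (of_real (fs j x))))
      = (\<Sum>j<k. of_real (1 / (b - a)) * (LINT x:{a..b}|lborel. F (of_real (fs j x)))) / of_nat k"
    by (simp only: set_integral_mult_right sum_lint sum_distrib_left[symmetric]) simp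
  also have "\<dots> = (\<Sum>j<k. \<integral>y. F (of_real y) \<partial>image_distribution a b (fs j)) / of_nat k"
    using integral_image_distribution[OF assms(1) assms(2) F_meas]
    by (simp add: scaleR_conv_of_real)
  finally show ?thesis .
qed

lemma empirical_average_tendsto_if_cdf_tendsto:
  fixes F :: "real \<Rightarrow> 'b::{banach, second_countable_topology}"
  assumes "real_distribution \<mu>" "eventually (\<lambda>n. A n \<noteq> {#}) sequentially"
    and "\<And>x. isCont (cdf \<mu>) x \<Longrightarrow>
      (\<lambda>n. real (size (filter_mset (\<lambda>v. v \<le> x) (A n))) / real (size (A n))) \<longlonglongrightarrow> cdf \<mu> x"
    and "\<And>x. isCont F x" "\<And>x. norm (F x) \<le> B"
  shows "(\<lambda>n. (1 / real (size (A n))) *\<^sub>R (\<Sum>x\<in>#A n. F x)) \<longlonglongrightarrow> (\<integral>x. F x \<partial>\<mu>)"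
proof -
  \<comment> \<open>\<open>\<mu>\<close> stands in for the undefined empirical measure of an empty multiset\<close>
  define \<mu>s where "\<mu>s n = (if A n = {#} then \<mu> else empirical_measure (A n))" for n
  have "real_distribution (\<mu>s n)" for n
    using assms(1) real_distribution_empirical_measure by (simp add: \<mu>s_def)
  moreover have "weak_conv_m \<mu>s \<mu>"
    unfolding weak_conv_m_def weak_conv_def
  proof (intro allI impI)
    fix x assume "isCont (cdf \<mu>) x"
    from assms(3)[OF this] show "(\<lambda>n. cdf (\<mu>s n) x) \<longlonglongrightarrow> cdf \<mu> x"
      by (rule Lim_transform_eventually)
        (use assms(2) in \<open>eventually_elim, simp add: \<mu>s_def cdf_empirical_measure\<close>)
  qed
  ultimately have "(\<lambda>n. \<integral>x. F x \<partial>\<mu>s n) \<longlonglongrightarrow> (\<integral>x. F x \<partial>\<mu>)"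
    using assms(1,4,5) by (intro weak_conv_imp_integral_bdd_continuous_conv)
  moreover have F_meas: "F \<in> borel_measurable borel"
    using assms(4) by (intro borel_measurable_continuous_onI continuous_at_imp_continuous_on) auto
  have "eventually (\<lambda>n. (\<integral>x. F x \<partial>\<mu>s n) = (1 / real (size (A n))) *\<^sub>R (\<Sum>x\<in>#A n. F x))
      sequentially"
    using assms(2) by eventually_elim (simp add: \<mu>s_def integral_empirical_measure F_meas)
  ultimately show ?thesis by (rule Lim_transform_eventually)
qed

lemma asym_distr_test_function_tendsto:
  fixes \<phi> :: "real \<Rightarrow> real"
  assumes "a < b" "\<And>j. j < k \<Longrightarrow> set_borel_measurable lborel {a..b} (f j)" "asym_distr Lam a b f k"
    and "continuous_on UNIV \<phi>" "bounded {x. \<phi> x \<noteq> 0}"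
  shows "(\<lambda>n. (\<Sum>x\<in>#Lam n. \<phi> x) / real (size (Lam n)))
    \<longlonglongrightarrow> (\<Sum>j<k. \<integral>x. \<phi> x \<partial>image_distribution a b (f j)) / real k"
proof -
  define F where "F z = complex_of_real (\<phi> (Re z) * max 0 (1 - \<bar>Im z\<bar>))" for z
  have F_real: "F (of_real x) = of_real (\<phi> x)" for x
    by (simp add: F_def)
  have cont_F: "continuous_on UNIV F"
    unfolding F_def using assms(4)
    by (intro continuous_intros continuous_on_compose2[OF assms(4)]) auto
  have supp_F: "bounded_support F"
  proof -
    obtain R where R: "\<And>x. \<phi> x \<noteq> 0 \<Longrightarrow> \<bar>x\<bar> \<le> R"
      using assms(5) unfolding bounded_iff by auto
    have "cmod z \<le> R + 1" if "F z \<noteq> 0" for z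
      using that R[of "Re z"] cmod_le[of z] by (auto simp: F_def split: if_splits)
    then show ?thesis
      unfolding bounded_support_def bounded_iff by blast
  qed
  have "(\<lambda>n. (\<Sum>x\<in>#Lam n. F (of_real x)) / of_nat (size (Lam n))) \<longlonglongrightarrow>
      of_real (1 / (b - a)) * (LINT x:{a..b}|lborel. (1 / of_nat k) * (\<Sum>j<k. F (of_real (f j x))))"
    using assms(3) cont_F supp_F unfolding asym_distr_def by blast
  also have "of_real (1 / (b - a)) * (LINT x:{a..b}|lborel. (1 / of_nat k) * (\<Sum>j<k. F (of_real (f j x))))
      = (\<Sum>j<k. \<integral>y. F (of_real y) \<partial>image_distribution a b (f j)) / of_nat k"
    by (rule asym_distr_limit_eq[OF assms(1) assms(2) cont_F supp_F])
  finally have "(\<lambda>n. complex_of_real ((\<Sum>x\<in>#Lam n. \<phi> x) / real (size (Lam n))))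
      \<longlonglongrightarrow> complex_of_real ((\<Sum>j<k. \<integral>x. \<phi> x \<partial>image_distribution a b (f j)) / real k)"
    by (simp add: F_real flip: of_real_sum_mset)
  then show ?thesis by (simp only: tendsto_of_real_iff)
qed

lemma asym_distr_if_cdf_tendsto:
  assumes "a < b" "set_borel_measurable lborel {a..b} h"
    and "filterlim (\<lambda>n. size (A n)) at_top sequentially"
    and "\<And>x. isCont (cdf (image_distribution a b h)) x \<Longrightarrow>
      (\<lambda>n. real (size (filter_mset (\<lambda>v. v \<le> x) (A n))) / real (size (A n)))
        \<longlonglongrightarrow> cdf (image_distribution a b h) x"
  shows "asym_distr A a b (\<lambda>_. h) 1"
proof -
  have "(\<lambda>n. (\<Sum>x\<in>#A n. F (of_real x)) / of_nat (size (A n))) \<longlonglongrightarrow>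
      of_real (1 / (b - a)) * (LINT x:{a..b}|lborel. (1 / of_nat 1) * (\<Sum>j<1::nat. F (of_real (h x))))"
    if F: "continuous_on UNIV F" "bounded_support F" for F :: "complex \<Rightarrow> complex"
  proof -
    obtain B where B: "\<And>z. norm (F z) \<le> B"
      using bounded_norm_if_bounded_support F unfolding bounded_support_def by blast
    have "continuous_on UNIV (\<lambda>y. F (of_real y))"
      by (rule continuous_on_compose2[OF F(1) continuous_on_of_real[OF continuous_on_id]]) simp
    then have "isCont (\<lambda>y. F (of_real y)) x" for x
      by (simp add: continuous_on_eq_continuous_at)
    then have "(\<lambda>n. (1 / real (size (A n))) *\<^sub>R (\<Sum>x\<in>#A n. F (of_real x)))
        \<longlonglongrightarrow> (\<integral>y. F (of_real y) \<partial>image_distribution a b h)"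
      using B by (intro empirical_average_tendsto_if_cdf_tendsto[OF
            real_distribution_image_distribution[OF assms(1,2)]
            eventually_nonempty_if_size_at_top[OF assms(3)] assms(4)])
    moreover have "(1 / real (size (A n))) *\<^sub>R (\<Sum>x\<in>#A n. F (of_real x))
        = (\<Sum>x\<in>#A n. F (of_real x)) / of_nat (size (A n))" for n
      by (simp add: scaleR_conv_of_real divide_inverse mult.commute)
    moreover have "(\<integral>y. F (of_real y) \<partial>image_distribution a b h)
        = of_real (1 / (b - a)) * (LINT x:{a..b}|lborel. (1 / of_nat 1) * (\<Sum>j<1::nat. F (of_real (h x))))"
      using asym_distr_limit_eq[OF assms(1), of 1 "\<lambda>_. h" F] assms(2) F by simp
    ultimately show ?thesis by simp
  qed
  then show ?thesis
    using assms(3) unfolding asym_distr_def by blast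
qed

lemma pos_if_sum_eq_size_at_top:
  fixes A :: "nat \<Rightarrow> 'a multiset" and L :: "nat \<Rightarrow> nat \<Rightarrow> nat" and k :: nat
  assumes "filterlim (\<lambda>n. size (A n)) at_top sequentially" "\<And>n. (\<Sum>j<k. L n j) = size (A n)"
  shows "k > 0"
proof (rule ccontr)
  assume "\<not> k > 0"
  then have "A n = {#}" for n
    using assms(2)[of n] by simp
  then show False using eventually_nonempty_if_size_at_top[OF assms(1)] by simp
qed

lemma mixture_partition_image_distribution:
  assumes "a < b" "\<And>j. j < k \<Longrightarrow> set_borel_measurable lborel {a..b} (f j)" "asym_distr Lam a b f k"
    and "\<And>n. (\<Sum>j<k. L n j) = size (Lam n)"
    and "\<And>j. j < k \<Longrightarrow> (\<lambda>n. real (L n j) / real (size (Lam n))) \<longlonglongrightarrow> 1 / real k"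
  shows "mixture_partition k (\<lambda>j. image_distribution a b (f j)) Lam L"
proof -
  have size_at_top: "filterlim (\<lambda>n. size (Lam n)) at_top sequentially"
    using assms(3) unfolding asym_distr_def by blast
  interpret finite_mixture k "\<lambda>j. image_distribution a b (f j)"
    unfolding finite_mixture_def
    using pos_if_sum_eq_size_at_top[OF size_at_top assms(4)]
      real_distribution_image_distribution[OF assms(1) assms(2)] by blast
  have "mixture_sequence_axioms k (\<lambda>j. image_distribution a b (f j)) Lam"
    unfolding mixture_sequence_axioms_def mix_integral_def
    by (intro conjI allI impI size_at_top asym_distr_test_function_tendsto[OF assms(1-3)])
  moreover have "mixture_partition_axioms k Lam L"
    unfolding mixture_partition_axioms_def using assms(4,5) by blast
  ultimately show ?thesis
    by (intro mixture_partition.intro mixture_sequence.intro finite_mixture_axioms)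
qed

theorem lemma2p8:
  fixes a b :: real and k :: nat
    and f :: "nat \<Rightarrow> real \<Rightarrow> real"
    and Lam :: "nat \<Rightarrow> real multiset"
    and L :: "nat \<Rightarrow> nat \<Rightarrow> nat"
  assumes "a < b"
    and "\<And>j. j < k \<Longrightarrow> set_borel_measurable lborel {a..b} (f j)"
    and "asym_distr Lam a b f k"
    and "\<And>n. (\<Sum>j<k. L n j) = size (Lam n)"
    and "\<And>j. j < k \<Longrightarrow> (\<lambda>n. real (L n j) / real (size (Lam n))) \<longlonglongrightarrow> 1 / real k"
  shows "\<exists>P :: nat \<Rightarrow> nat \<Rightarrow> real multiset.
           (\<forall>n. (\<Sum>j<k. P n j) = Lam n \<and> (\<forall>j<k. size (P n j) = L n j)) \<and>
           (\<forall>j<k. asym_distr (\<lambda>n. P n j) a b (\<lambda>_. f j) 1)"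
proof -
  interpret mixture_partition k "\<lambda>j. image_distribution a b (f j)" Lam L
    by (rule mixture_partition_image_distribution[OF assms])
  show ?thesis
  proof (intro exI[of _ part] conjI allI impI)
    show "(\<Sum>j<k. part n j) = Lam n" for n
      by (rule sum_parts)
    show "size (part n j) = L n j" if "j < k" for n j
      using that by (rule size_part)
    show "asym_distr (\<lambda>n. part n j) a b (\<lambda>_. f j) 1" if "j < k" for j
      using that assms(1,2) size_part_at_top part_cdf_tendsto
      by (intro asym_distr_if_cdf_tendsto) (auto simp: size_part)
  qed
qed

end
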